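(* Let $2\le r<s<k$ and let $H$ be a full $(s,s-r)$-starplus on $k$ vertices with excess $\lambda$ satisfying $$\lambda\le\frac{r\binom{k-s+r}{r}-(k-s+r)}{k-s}.$$ Then $H$ is $r$-balanced: every sub-hypergraph $H'\subseteq H$ with at least $s$ vertices satisfies $f^{(r)}(H')\le f^{(r)}(H)$.
   Context: A full $(s,c)$-starplus on $k$ vertices with excess $\lambda$ ($1\le c<s<k$) is an $s$-uniform hypergraph on a $k$-element vertex set $V$ with a distinguished $c$-set $C\subseteq V$, whose edge set is the edge-disjoint union of all $\binom{k-c}{s-c}$ $s$-subsets of $V$ containing $C$ and of $\lambda$ further $s$-subsets of $V$ not containing $C$. For an $s$-graph $H$ with $v_H$ vertices and $e_H$ edges, $f^{(r)}(H)=\frac{e_H}{v_H-s+r}$. *)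

theory Defs
  imports Complex_Main
begin

definition f_r :: "nat \<Rightarrow> nat \<Rightarrow> 'a set \<Rightarrow> 'a set set \<Rightarrow> real" where
  "f_r r s V E = real (card E) / (real (card V) - real s + real r)"

definition full_starplus ::
  "nat \<Rightarrow> nat \<Rightarrow> nat \<Rightarrow> nat \<Rightarrow> 'a set \<Rightarrow> 'a set \<Rightarrow> 'a set set \<Rightarrow> bool" where
  "full_starplus s c k lam V C E \<longleftrightarrow>
     1 \<le> c \<and> c < s \<and> s < k \<and> finite V \<and> card V = k \<and> C \<subseteq> V \<and> card C = c \<and>
     (\<exists>L. L \<subseteq> {e. e \<subseteq> V \<and> card e = s \<and> \<not> C \<subseteq> e} \<and> card L = lam \<and>
          E = {e. e \<subseteq> V \<and> card e = s \<and> C \<subseteq> e} \<union> L)"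

definition r_balanced :: "nat \<Rightarrow> nat \<Rightarrow> 'a set \<Rightarrow> 'a set set \<Rightarrow> bool" where
  "r_balanced r s V E \<longleftrightarrow>
     (\<forall>V' E'. V' \<subseteq> V \<and> E' \<subseteq> E \<and> (\<forall>e\<in>E'. e \<subseteq> V') \<and> s \<le> card V'
        \<longrightarrow> f_r r s V' E' \<le> f_r r s V E)"

end

theory Submission
  imports Defs
begin

(* Let m = k - s + r. A subhypergraph on V' has at most C(n, r) + lam edges, where
   n = |V'| - (s - r) is exactly its denominator: the s-sets through C inside V' number
   C(n, r) (none if C is not inside V'), and at most lam further edges remain. So it suffices
   that (C(n, r) + lam) / n, for r <= n <= m, is largest at n = m. Since n |-> C(n, r) is
   convex it lies below its chord from (r, 1) to (m, C(m, r)), and the bound on lam is precisely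
   what makes the chord estimate give the comparison. *)

lemma convex_seq_chord:
  fixes g :: "nat \<Rightarrow> real"
  assumes incr: "incseq (\<lambda>j. g (Suc j) - g j)" and "r \<le> n" "n \<le> m"
  shows "(real m - real r) * g n \<le> (real m - real n) * g r + (real n - real r) * g m"
proof -
  define D where "D j = g (Suc j) - g j" for j
  have D_mono: "D i \<le> D j" if "i \<le> j" for i j
    using monoD [OF incr that] by (simp add: D_def)
  have "g n - g r = (\<Sum>j = r..<n. D j)"
    unfolding D_def using \<open>r \<le> n\<close> by (rule sum_Suc_diff' [symmetric])
  also have "\<dots> \<le> (real n - real r) * D n"
    using sum_bounded_above [of "{r..<n}" D "D n"] D_mono \<open>r \<le> n\<close> by simp
  finally have left: "g n - g r \<le> (real n - real r) * D n" .
  have "(real m - real n) * D n \<le> (\<Sum>j = n..<m. D j)"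
    using sum_bounded_below [of "{n..<m}" "D n" D] D_mono \<open>n \<le> m\<close> by simp
  also have "\<dots> = g m - g n"
    unfolding D_def using \<open>n \<le> m\<close> by (rule sum_Suc_diff')
  finally have right: "(real m - real n) * D n \<le> g m - g n" .
  have "(real m - real n) * (g n - g r) \<le> (real n - real r) * (g m - g n)"
    using mult_left_mono [OF left, of "real m - real n"] mult_left_mono [OF right, of "real n - real r"]
      assms(2,3) by (simp add: algebra_simps)
  then show ?thesis by (simp add: algebra_simps)
qed

lemma incseq_binomial_increments: "incseq (\<lambda>j. real (Suc j choose r) - real (j choose r))"
proof (cases r)
  case (Suc q)
  then show ?thesis by (simp add: mono_def binomial_right_mono)
qed (simp add: mono_def)

lemma choose_add_divide_mono:
  fixes l :: real
  assumes "0 < r" "r \<le> n" "n \<le> m"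
    and excess: "l * (real m - real r) \<le> real r * real (m choose r) - real m"
  shows "(real (n choose r) + l) / real n \<le> (real (m choose r) + l) / real m"
proof (cases "n = m")
  case False
  with assms(2,3) have "r < m" by simp
  have chord: "(real m - real r) * real (n choose r)
      \<le> (real m - real n) + (real n - real r) * real (m choose r)"
    using convex_seq_chord [OF incseq_binomial_increments [of r] \<open>r \<le> n\<close> \<open>n \<le> m\<close>] by simp
  \<comment> \<open>by the chord, (m - r) times the difference of the cross-multiplied sides is at most
    (m - n) (m - r M - (m - r) l), which is nonpositive by excess\<close>
  have "(real m - real r) * (real m * (real (n choose r) + l))
      \<le> (real m - real r) * (real n * (real (m choose r) + l))"
    using mult_left_mono [OF chord, of "real m"]
      mult_left_mono [OF excess, of "real m - real n"] \<open>n \<le> m\<close>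
    by (simp add: algebra_simps)
  then have "real m * (real (n choose r) + l) \<le> real n * (real (m choose r) + l)"
    using \<open>r < m\<close> by simp
  then show ?thesis
    using assms(1,2) \<open>r < m\<close> by (simp add: divide_simps mult.commute)
qed simp

lemma card_supersets_eq_choose:
  assumes "finite W" "C \<subseteq> W" "card C \<le> s"
  shows "card {e. e \<subseteq> W \<and> card e = s \<and> C \<subseteq> e} = card (W - C) choose (s - card C)"
proof -
  have fin_C: "finite C" using assms finite_subset by blast
  have "bij_betw (\<lambda>B. B \<union> C) {B. B \<subseteq> W - C \<and> card B = s - card C}
      {e. e \<subseteq> W \<and> card e = s \<and> C \<subseteq> e}"
  proof (rule bij_betw_byWitness [where f' = "\<lambda>e. e - C"])
    show "(\<lambda>B. B \<union> C) ` {B. B \<subseteq> W - C \<and> card B = s - card C}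
        \<subseteq> {e. e \<subseteq> W \<and> card e = s \<and> C \<subseteq> e}"
    proof clarify
      fix B assume B: "B \<subseteq> W - C" "card B = s - card C"
      then have "card (B \<union> C) = card B + card C"
        using assms fin_C by (intro card_Un_disjoint) (auto intro: finite_subset)
      with B assms(2,3) show "B \<union> C \<subseteq> W \<and> card (B \<union> C) = s \<and> C \<subseteq> B \<union> C" by auto
    qed
  qed (use fin_C in \<open>auto simp: card_Diff_subset\<close>)
  then have "card {e. e \<subseteq> W \<and> card e = s \<and> C \<subseteq> e} = card {B. B \<subseteq> W - C \<and> card B = s - card C}"
    by (simp add: bij_betw_same_card)
  also have "\<dots> = card (W - C) choose (s - card C)"
    using assms by (intro n_subsets) auto
  finally show ?thesis .
qed

lemma card_full_starplus:
  assumes "full_starplus s c k lam V C E"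
  shows "card E = ((k - c) choose (s - c)) + lam"
proof -
  from assms obtain L where V: "finite V" "card V = k" "C \<subseteq> V" "card C = c" "c < s"
    and L: "L \<subseteq> {e. e \<subseteq> V \<and> card e = s \<and> \<not> C \<subseteq> e}" "card L = lam"
    and E: "E = {e. e \<subseteq> V \<and> card e = s \<and> C \<subseteq> e} \<union> L"
    unfolding full_starplus_def by blast
  have "finite L" using L(1) V(1) by (auto intro: finite_subset)
  then have "card E = card {e. e \<subseteq> V \<and> card e = s \<and> C \<subseteq> e} + card L"
    unfolding E using L(1) V(1) by (intro card_Un_disjoint) auto
  then show ?thesis
    using card_supersets_eq_choose [of V C s] V L(2) by (simp add: card_Diff_subset finite_subset)
qed

lemma card_sub_full_starplus_le:
  assumes "full_starplus s c k lam V C E"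
    and "V' \<subseteq> V" "E' \<subseteq> E" "\<forall>e\<in>E'. e \<subseteq> V'"
  shows "card E' \<le> ((card V' - c) choose (s - c)) + lam"
proof -
  let ?star = "{e. e \<subseteq> V' \<and> card e = s \<and> C \<subseteq> e}"
  from assms(1) obtain L where V: "finite V" "C \<subseteq> V" "card C = c" "c < s"
    and L: "L \<subseteq> {e. e \<subseteq> V \<and> card e = s \<and> \<not> C \<subseteq> e}" "card L = lam"
    and E: "E = {e. e \<subseteq> V \<and> card e = s \<and> C \<subseteq> e} \<union> L"
    unfolding full_starplus_def by blast
  have fin_V': "finite V'" using assms(2) V(1) by (rule finite_subset)
  have "card E' \<le> card (?star \<union> L)"
    using assms(3,4) E fin_V' L(1) V(1) by (intro card_mono) (auto intro: finite_subset)
  also have "\<dots> \<le> card ?star + lam"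
    using card_Un_le [of ?star L] L(2) by simp
  also have "card ?star \<le> (card V' - c) choose (s - c)"
  proof (cases "C \<subseteq> V'")
    case True
    then show ?thesis
      using card_supersets_eq_choose [of V' C s] fin_V' V by (simp add: card_Diff_subset finite_subset)
  next
    case False
    then have "?star = {}" by blast
    then show ?thesis by (simp only: card.empty le0)
  qed
  finally show ?thesis by simp
qed

lemma f_r_full_starplus:
  assumes "full_starplus s (s - r) k lam V C E" "r < s" "s < k"
  shows "f_r r s V E = (real ((k - s + r) choose r) + real lam) / real (k - s + r)"
proof -
  have "card V = k" using assms(1) unfolding full_starplus_def by blast
  then show ?thesis
    using card_full_starplus [OF assms(1)] assms(2,3) by (simp add: f_r_def of_nat_diff)
qed

theorem proposition18:
  fixes r s k lam :: nat and V C :: "'a set" and E :: "'a set set"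
  assumes "2 \<le> r" and "r < s" and "s < k"
    and "full_starplus s (s - r) k lam V C E"
    and "real lam \<le> (real r * real ((k - s + r) choose r) - real (k - s + r)) / real (k - s)"
  shows "r_balanced r s V E"
proof -
  define m where "m = k - s + r"
  have V: "finite V" "card V = k" using assms(4) unfolding full_starplus_def by blast+
  have "real (k - s) = real m - real r" "0 < real (k - s)" using assms(2,3) unfolding m_def by auto
  then have excess: "real lam * (real m - real r) \<le> real r * real (m choose r) - real m"
    using assms(5) unfolding m_def [symmetric] by (simp only: pos_le_divide_eq)
  have density: "f_r r s V E = (real (m choose r) + real lam) / real m"
    unfolding m_def using f_r_full_starplus [OF assms(4)] assms(2,3) by simp
  show ?thesis unfolding r_balanced_def
  proof (intro allI impI, elim conjE)
    fix V' E' assume sub: "V' \<subseteq> V" "E' \<subseteq> E" "\<forall>e\<in>E'. e \<subseteq> V'" "s \<le> card V'"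
    define n where "n = card V' - (s - r)"
    have "card V' \<le> k" using card_mono [OF V(1) sub(1)] V(2) by simp
    then have n: "r \<le> n" "n \<le> m" "real n = real (card V') - real s + real r"
      using sub(4) assms(2) unfolding n_def m_def by auto
    have "card E' \<le> (n choose r) + lam"
      using card_sub_full_starplus_le [OF assms(4) sub(1-3)] assms(2) unfolding n_def by simp
    then have "f_r r s V' E' \<le> (real (n choose r) + real lam) / real n"
      unfolding f_r_def n(3) [symmetric] by (simp add: divide_right_mono)
    also have "\<dots> \<le> (real (m choose r) + real lam) / real m"
      using choose_add_divide_mono [OF _ n(1,2) excess] assms(1) by simp
    finally show "f_r r s V' E' \<le> f_r r s V E" unfolding density .
  qed
qed

end
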